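(* Let $C\subset X$ be a strictly convex cone and $T:X\to Y$ a linear mapping between finite-dimensional Euclidean spaces such that $\{0\}\neq\operatorname{Ker}T\cap C\subset\operatorname{bd}C$. Then $T(C)$ is a pointed cone in $Y$.
   Context: A cone $D$ is pointed if $D\cap(-D)=\{0\}$. A cone is regular if pointed, closed, convex, with nonempty interior; a regular cone is strictly convex if every face other than the cone itself and $\{0\}$ has dimension one (a face being a convex $\mathcal F\subset C$ such that $x,y\in C$, $\lambda x+(1-\lambda)y\in\mathcal F$ for some $0<\lambda<1$ implies $x,y\in\mathcal F$). *)

theory Defs
  imports "HOL-Analysis.Analysis"
begin

definition pointed_cone :: "'a::real_vector set \<Rightarrow> bool" where
  "pointed_cone D \<longleftrightarrow> D \<inter> uminus ` D = {0}"

definition regular_cone :: "'a::euclidean_space set \<Rightarrow> bool" where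
  "regular_cone C \<longleftrightarrow> cone C \<and> pointed_cone C \<and> closed C \<and> convex C \<and> interior C \<noteq> {}"

text \<open>Faces in the sense of the paper coincide with the library notion face_of
  (nonempty faces are considered; the empty set is not regarded as a face).\<close>
definition strictly_convex_cone :: "'a::euclidean_space set \<Rightarrow> bool" where
  "strictly_convex_cone C \<longleftrightarrow> regular_cone C \<and>
     (\<forall>F. F face_of C \<and> F \<noteq> {} \<and> F \<noteq> C \<and> F \<noteq> {0} \<longrightarrow> aff_dim F = 1)"

end

theory Submission
  imports Defs
begin

text \<open>If \<open>T a = - T b\<close> with \<open>a, b \<in> C\<close>, then \<open>a + b\<close> lies in \<open>Ker T \<inter> C\<close>, hence on the boundary
  of \<open>C\<close>. A supporting hyperplane at \<open>a + b\<close> cuts out a proper face of \<open>C\<close> containing \<open>0\<close>,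
  \<open>a + b\<close> and both summands; by strict convexity this face is the ray through \<open>a + b\<close>.
  So \<open>a\<close> is a multiple of \<open>a + b\<close> and \<open>T a = 0\<close>.\<close>

lemma regular_cone_imp_convex_cone: "regular_cone C \<Longrightarrow> convex_cone C"
  unfolding regular_cone_def convex_cone_def conic_def cone_def by auto

lemma aff_dim_one_subset_span_singleton:
  fixes F :: "'a::euclidean_space set"
  assumes "0 \<in> F" "x \<in> F" "x \<noteq> 0" "aff_dim F = 1"
  shows "F \<subseteq> span {x}"
proof -
  have "dim F = 1"
    using assms(1,4) aff_dim_zero hull_inc by fastforce
  then have "dim (span F) \<le> dim (span {x})"
    using assms(3) by (simp add: dim_span)
  moreover have "span {x} \<subseteq> span F"
    using assms(2) by (simp add: span_mono)
  ultimately have "span {x} = span F"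
    using subspace_dim_equal[OF subspace_span subspace_span] by blast
  then show ?thesis
    using span_superset by blast
qed

lemma convex_cone_supporting_hyperplane_frontier:
  fixes C :: "'a::euclidean_space set"
  assumes "convex_cone C" "interior C \<noteq> {}" "x \<in> C" "x \<in> frontier C"
  obtains w where "\<And>y. y \<in> C \<Longrightarrow> 0 \<le> w \<bullet> y" "w \<bullet> x = 0" "C \<inter> {y. w \<bullet> y = 0} \<noteq> C"
proof -
  have "convex C"
    using assms(1) by (simp add: convex_cone_def)
  have ri: "rel_interior C = interior C"
    using assms(2) rel_interior_nonempty_interior by blast
  have "x \<notin> rel_interior C"
    using assms(4) ri by (simp add: frontier_def)
  moreover have "x \<in> closure C"
    using assms(3) closure_subset by blast
  ultimately obtain w where le: "\<And>y. y \<in> closure C \<Longrightarrow> w \<bullet> x \<le> w \<bullet> y"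
    and lt: "\<And>y. y \<in> rel_interior C \<Longrightarrow> w \<bullet> x < w \<bullet> y"
    using supporting_hyperplane_relative_frontier[OF \<open>convex C\<close>] by metis
  have leC: "w \<bullet> x \<le> w \<bullet> y" if "y \<in> C" for y
    using le that closure_subset by blast
  have "w \<bullet> x \<le> 0"
    using leC[of 0] convex_cone_contains_0[OF assms(1)] by simp
  moreover have "w \<bullet> x \<le> 2 * (w \<bullet> x)"
    using leC[of "2 *\<^sub>R x"] convex_cone_scaleR[OF assms(1) _ assms(3)] by simp
  ultimately have wx: "w \<bullet> x = 0"
    by linarith
  obtain z where "z \<in> interior C"
    using assms(2) by blast
  then have "z \<in> C" "w \<bullet> z \<noteq> 0"
    using lt[of z] ri wx interior_subset by auto
  then have "C \<inter> {y. w \<bullet> y = 0} \<noteq> C"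
    by blast
  moreover have "0 \<le> w \<bullet> y" if "y \<in> C" for y
    using leC[OF that] wx by simp
  ultimately show ?thesis
    using that wx by blast
qed

lemma strictly_convex_cone_frontier_summand_in_span:
  fixes C :: "'a::euclidean_space set"
  assumes "strictly_convex_cone C" "a \<in> C" "b \<in> C" "a + b \<in> frontier C" "a + b \<noteq> 0"
  shows "a \<in> span {a + b}"
proof -
  have "regular_cone C"
    and faces: "\<And>F. \<lbrakk>F face_of C; F \<noteq> {}; F \<noteq> C; F \<noteq> {0}\<rbrakk> \<Longrightarrow> aff_dim F = 1"
    using assms(1) unfolding strictly_convex_cone_def by auto
  then have cc: "convex_cone C" and "convex C" and "interior C \<noteq> {}"
    using regular_cone_imp_convex_cone regular_cone_def by blast+
  have "a + b \<in> C"
    using convex_cone_add[OF cc assms(2,3)] .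
  then obtain w where w: "\<And>y. y \<in> C \<Longrightarrow> 0 \<le> w \<bullet> y" "w \<bullet> (a + b) = 0"
    and proper: "C \<inter> {y. w \<bullet> y = 0} \<noteq> C"
    using convex_cone_supporting_hyperplane_frontier[OF cc \<open>interior C \<noteq> {}\<close> _ assms(4)] by blast
  define F where "F = C \<inter> {y. w \<bullet> y = 0}"
  have "F face_of C"
    unfolding F_def using face_of_Int_supporting_hyperplane_ge[OF \<open>convex C\<close>] w(1)
    by blast
  have "0 \<le> w \<bullet> a" "0 \<le> w \<bullet> b" "w \<bullet> a + w \<bullet> b = 0"
    using w assms(2,3) by (simp_all add: inner_add_right)
  then have "w \<bullet> a = 0"
    by linarith
  then have in_F: "0 \<in> F" "a + b \<in> F" "a \<in> F"
    unfolding F_def using convex_cone_contains_0[OF cc] \<open>a + b \<in> C\<close> w(2) assms(2) by auto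
  moreover have "F \<noteq> C"
    using proper F_def by blast
  moreover have "F \<noteq> {0}"
    using in_F(2) assms(5) by blast
  ultimately have "aff_dim F = 1"
    using faces[OF \<open>F face_of C\<close>] by blast
  then show ?thesis
    using aff_dim_one_subset_span_singleton[OF in_F(1,2) assms(5)] in_F(3) by blast
qed

lemma pointed_cone_linear_image_strictly_convex_cone:
  fixes C :: "'a::euclidean_space set" and T :: "'a \<Rightarrow> 'b::euclidean_space"
  assumes "strictly_convex_cone C" "linear T" "{x. T x = 0} \<inter> C \<subseteq> frontier C"
  shows "pointed_cone (T ` C)"
  unfolding pointed_cone_def
proof (intro equalityI subsetI)
  have "regular_cone C"
    using assms(1) strictly_convex_cone_def by blast
  then have cc: "convex_cone C" and pointed: "C \<inter> uminus ` C = {0}"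
    using regular_cone_imp_convex_cone regular_cone_def pointed_cone_def by blast+
  show "y \<in> T ` C \<inter> uminus ` T ` C" if "y \<in> {0}" for y
    using that convex_cone_contains_0[OF cc] linear_0[OF assms(2)] by force
  fix y
  assume "y \<in> T ` C \<inter> uminus ` T ` C"
  then obtain a b where a: "a \<in> C" "y = T a" and b: "b \<in> C" "y = - T b"
    by auto
  then have ker: "T (a + b) = 0"
    using linear_add[OF assms(2)] by (metis add.commute neg_eq_iff_add_eq_0)
  show "y \<in> {0}"
  proof (cases "a + b = 0")
    case True
    then have "a = - b"
      by (simp add: eq_neg_iff_add_eq_0)
    then have "a \<in> C \<inter> uminus ` C"
      using a b by auto
    then show ?thesis
      using pointed a linear_0[OF assms(2)] by auto
  next
    case False
    have "a + b \<in> frontier C"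
      using assms(3) ker convex_cone_add[OF cc a(1) b(1)] by blast
    then obtain k where "a = k *\<^sub>R (a + b)"
      using strictly_convex_cone_frontier_summand_in_span[OF assms(1) a(1) b(1) _ False]
      by (auto simp: span_singleton)
    then have "T a = k *\<^sub>R T (a + b)"
      using linear_cmul[OF assms(2)] by metis
    then show ?thesis
      using a ker by simp
  qed
qed

theorem lemma3:
  fixes C :: "'a::euclidean_space set" and T :: "'a \<Rightarrow> 'b::euclidean_space"
  assumes "strictly_convex_cone C"
    and "linear T"
    and "{x. T x = 0} \<inter> C \<noteq> {0}"
    and "{x. T x = 0} \<inter> C \<subseteq> frontier C"
  shows "cone (T ` C) \<and> pointed_cone (T ` C)"
proof
  have "cone C"
    using assms(1) by (simp add: strictly_convex_cone_def regular_cone_def)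
  then have "conic (T ` C)"
    using conic_linear_image[OF _ assms(2)] by (simp add: cone_def conic_def)
  then show "cone (T ` C)"
    by (simp add: cone_def conic_def)
  show "pointed_cone (T ` C)"
    using pointed_cone_linear_image_strictly_convex_cone[OF assms(1,2,4)] .
qed

end
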